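(* Let $r\in\mathbb Z_n$, $\mathsf V=\mathsf V(2,r)$, $k\ge2$, and $\lambda_r=q^{-r(r+1)}$. There is an algebra homomorphism $\mathsf H_k(q)\to\mathrm{End}_{\mathsf D_n}(\mathsf V^{\otimes k})$ sending $\mathsf s_i\mapsto\lambda_r^{-1}\check{\mathsf R}_i$ for $1\le i\le k-1$.
   Context: $\mathbb k$ algebraically closed of characteristic zero, $n\ge2$, $q\in\mathbb k$ a primitive $n$th root of unity. $\mathsf D_n$ is the Hopf algebra generated by $a,b,c,d$ with relations $ba=qab$, $db=qbd$, $bc=cb$, $ca=qac$, $dc=qcd$, $da-qad=1-bc$, $a^n=d^n=0$, $b^n=c^n=1$ and $\Delta(a)=a\otimes b+1\otimes a$, $\Delta(d)=d\otimes c+1\otimes d$, $\Delta(b)=b\otimes b$, $\Delta(c)=c\otimes c$. For $1\le\ell\le n$, $s\in\mathbb Z_n$, $\mathsf V(\ell,s)$ is the module with basis $v_1,\dots,v_\ell$ and action $a.v_j=v_{j+1}$ ($j<\ell$), $a.v_\ell=0$, $b.v_j=q^{s+j-1}v_j$, $c.v_j=q^{j-(s+\ell)}v_j$, $d.v_1=0$, $d.v_j=\alpha_{j-1}(\ell)v_{j-1}$ ($j>1$), $\alpha_i(\ell)=\frac{(q^i-1)(1-q^{i-\ell})}{q-1}$. With $[m]=1+q+\dots+q^{m-1}$, $[m]!=[m]\cdots[1]$, $[0]!=1$, the R-matrix is $\mathcal R=\frac1n\sum_{m,s,t=0}^{n-1}\frac{q^{-tm}}{[s]!}a^sb^t\otimes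 c^md^s$. $\mathsf R$ is the action of $\mathcal R$ on $\mathsf V\otimes\mathsf V$ ($a^sb^t$ on the first factor), $\sigma$ the flip, $\check{\mathsf R}=\sigma\mathsf R$, and $\check{\mathsf R}_i=\mathrm{id}^{\otimes(i-1)}\otimes\check{\mathsf R}\otimes\mathrm{id}^{\otimes(k-i-1)}$ acting on tensor slots $i,i+1$ of $\mathsf V^{\otimes k}$. The Iwahori–Hecke algebra $\mathsf H_k(q)$ is the $\mathbb k$-algebra with generators $\mathsf s_1,\dots,\mathsf s_{k-1}$ and relations $\mathsf s_i\mathsf s_j=\mathsf s_j\mathsf s_i$ ($|i-j|>1$), $\mathsf s_i\mathsf s_{i+1}\mathsf s_i=\mathsf s_{i+1}\mathsf s_i\mathsf s_{i+1}$ ($1\le i\le k-2$), $(\mathsf s_i-1)(\mathsf s_i+q^{-1})=0$ ($1\le i\le k-1$). *)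

theory Defs
  imports "HOL-Computational_Algebra.Polynomial"
begin

text \<open>Single-site operators on V(l,s) as matrices: entry (i,j) is the coefficient of
v_i in x.v_j, indices in 1..l.\<close>
type_synonym 'a smat = "nat \<Rightarrow> nat \<Rightarrow> 'a"

text \<open>Operators on V(l,s)^{\<otimes>k} as matrices indexed by words w (length k, letters in 1..l);
the basis vector of word w is v_{w!0} \<otimes> ... \<otimes> v_{w!(k-1)}.\<close>
type_synonym 'a tmat = "nat list \<Rightarrow> nat list \<Rightarrow> 'a"

definition prim_root :: "nat \<Rightarrow> 'a::field \<Rightarrow> bool" where
  "prim_root n q \<longleftrightarrow> q ^ n = 1 \<and> (\<forall>m. 0 < m \<and> m < n \<longrightarrow> q ^ m \<noteq> 1)"

definition Dalpha :: "'a::field \<Rightarrow> nat \<Rightarrow> nat \<Rightarrow> 'a" where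
  "Dalpha q l i = (q ^ i - 1) * (1 - q powi (int i - int l)) / (q - 1)"

definition Vid :: "nat \<Rightarrow> 'a::field smat" where
  "Vid l = (\<lambda>i j. if i = j \<and> 1 \<le> j \<and> j \<le> l then 1 else 0)"

definition Va :: "nat \<Rightarrow> 'a::field smat" where
  "Va l = (\<lambda>i j. if 1 \<le> j \<and> j < l \<and> i = j + 1 then 1 else 0)"

definition Vb :: "'a::field \<Rightarrow> nat \<Rightarrow> int \<Rightarrow> 'a smat" where
  "Vb q l s = (\<lambda>i j. if i = j \<and> 1 \<le> j \<and> j \<le> l then q powi (s + int j - 1) else 0)"

definition Vc :: "'a::field \<Rightarrow> nat \<Rightarrow> int \<Rightarrow> 'a smat" where
  "Vc q l s = (\<lambda>i j. if i = j \<and> 1 \<le> j \<and> j \<le> l then q powi (int j - (s + int l)) else 0)"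

definition Vd :: "'a::field \<Rightarrow> nat \<Rightarrow> 'a smat" where
  "Vd q l = (\<lambda>i j. if 2 \<le> j \<and> j \<le> l \<and> i = j - 1 then Dalpha q l (j - 1) else 0)"

definition smul :: "nat \<Rightarrow> 'a::field smat \<Rightarrow> 'a smat \<Rightarrow> 'a smat" where
  "smul l A B = (\<lambda>i j. \<Sum>p\<in>{1..l}. A i p * B p j)"

definition spow :: "nat \<Rightarrow> 'a::field smat \<Rightarrow> nat \<Rightarrow> 'a smat" where
  "spow l A m = ((smul l A) ^^ m) (Vid l)"

definition qint :: "'a::field \<Rightarrow> nat \<Rightarrow> 'a" where
  "qint q m = (\<Sum>j<m. q ^ j)"

definition qfact :: "'a::field \<Rightarrow> nat \<Rightarrow> 'a" where
  "qfact q s = (\<Prod>m\<in>{1..s}. qint q m)"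

definition Rmat :: "'a::field \<Rightarrow> nat \<Rightarrow> nat \<Rightarrow> int \<Rightarrow> nat \<times> nat \<Rightarrow> nat \<times> nat \<Rightarrow> 'a" where
  "Rmat q n l r ii jj =
     (1 / of_nat n) * (\<Sum>m<n. \<Sum>s<n. \<Sum>t<n.
        q powi (- (int t * int m)) / qfact q s
        * smul l (spow l (Va l) s) (spow l (Vb q l r) t) (fst ii) (fst jj)
        * smul l (spow l (Vc q l r) m) (spow l (Vd q l) s) (snd ii) (snd jj))"

definition Rcheck :: "'a::field \<Rightarrow> nat \<Rightarrow> nat \<Rightarrow> int \<Rightarrow> nat \<times> nat \<Rightarrow> nat \<times> nat \<Rightarrow> 'a" where
  "Rcheck q n l r ii jj = Rmat q n l r (snd ii, fst ii) jj"

definition words :: "nat \<Rightarrow> nat \<Rightarrow> nat list set" where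
  "words l k = {w. length w = k \<and> set w \<subseteq> {1..l}}"

definition tmul :: "nat \<Rightarrow> nat \<Rightarrow> 'a::field tmat \<Rightarrow> 'a tmat \<Rightarrow> 'a tmat" where
  "tmul l k A B = (\<lambda>w u. \<Sum>v\<in>words l k. A w v * B v u)"

definition tid :: "'a::field tmat" where
  "tid = (\<lambda>w u. if w = u then 1 else 0)"

text \<open>Equality of operators on V^{\<otimes>k} (only entries indexed by actual basis words matter).\<close>
definition teq :: "nat \<Rightarrow> nat \<Rightarrow> 'a::field tmat \<Rightarrow> 'a tmat \<Rightarrow> bool" where
  "teq l k A B \<longleftrightarrow> (\<forall>w\<in>words l k. \<forall>u\<in>words l k. A w u = B w u)"

definition tensor :: "'a::field smat list \<Rightarrow> 'a tmat" where
  "tensor fs = (\<lambda>w u. \<Prod>p<length fs. (fs ! p) (w ! p) (u ! p))"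

text \<open>Rcheck_i acting on tensor slots i, i+1 (1-based), i.e. list positions i-1, i.\<close>
definition Rcheck_i :: "'a::field \<Rightarrow> nat \<Rightarrow> nat \<Rightarrow> int \<Rightarrow> nat \<Rightarrow> nat \<Rightarrow> 'a tmat" where
  "Rcheck_i q n l r k i = (\<lambda>w u.
     Rcheck q n l r (w ! (i - 1), w ! i) (u ! (i - 1), u ! i)
     * (\<Prod>p\<in>{..<k} - {i - 1, i}. if w ! p = u ! p then 1 else 0))"

text \<open>Action of the generators of D_n on V(l,s)^{\<otimes>k} via the iterated coproduct:
 Delta(a) = sum_j 1\<otimes>..\<otimes>1\<otimes>a\<otimes>b\<otimes>..\<otimes>b, Delta(d) = sum_j 1\<otimes>..\<otimes>1\<otimes>d\<otimes>c\<otimes>..\<otimes>c,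
 Delta(b) = b\<otimes>..\<otimes>b, Delta(c) = c\<otimes>..\<otimes>c.\<close>
definition Delta_a :: "'a::field \<Rightarrow> nat \<Rightarrow> int \<Rightarrow> nat \<Rightarrow> 'a tmat" where
  "Delta_a q l s k = (\<lambda>w u. \<Sum>j<k.
     tensor (replicate j (Vid l) @ [Va l] @ replicate (k - j - 1) (Vb q l s)) w u)"

definition Delta_d :: "'a::field \<Rightarrow> nat \<Rightarrow> int \<Rightarrow> nat \<Rightarrow> 'a tmat" where
  "Delta_d q l s k = (\<lambda>w u. \<Sum>j<k.
     tensor (replicate j (Vid l) @ [Vd q l] @ replicate (k - j - 1) (Vc q l s)) w u)"

definition Delta_b :: "'a::field \<Rightarrow> nat \<Rightarrow> int \<Rightarrow> nat \<Rightarrow> 'a tmat" where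
  "Delta_b q l s k = tensor (replicate k (Vb q l s))"

definition Delta_c :: "'a::field \<Rightarrow> nat \<Rightarrow> int \<Rightarrow> nat \<Rightarrow> 'a tmat" where
  "Delta_c q l s k = tensor (replicate k (Vc q l s))"

definition is_Dn_endo :: "'a::field \<Rightarrow> nat \<Rightarrow> int \<Rightarrow> nat \<Rightarrow> 'a tmat \<Rightarrow> bool" where
  "is_Dn_endo q l s k T \<longleftrightarrow>
     teq l k (tmul l k T (Delta_a q l s k)) (tmul l k (Delta_a q l s k) T) \<and>
     teq l k (tmul l k T (Delta_b q l s k)) (tmul l k (Delta_b q l s k) T) \<and>
     teq l k (tmul l k T (Delta_c q l s k)) (tmul l k (Delta_c q l s k) T) \<and>
     teq l k (tmul l k T (Delta_d q l s k)) (tmul l k (Delta_d q l s k) T)"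

definition hecke_img :: "'a::field \<Rightarrow> nat \<Rightarrow> int \<Rightarrow> nat \<Rightarrow> nat \<Rightarrow> 'a tmat" where
  "hecke_img q n r k i = (\<lambda>w u. inverse (q powi (- (r * (r + 1)))) * Rcheck_i q n 2 r k i w u)"

text \<open>The images T_1..T_{k-1} satisfy the defining relations of H_k(q) (so the assignment
s_i \<mapsto> T_i extends to an algebra homomorphism from the presented algebra H_k(q)) and lie in
End_{D_n}(V^{\<otimes>k}).\<close>
definition hecke_hom_exists :: "'a::field \<Rightarrow> nat \<Rightarrow> int \<Rightarrow> nat \<Rightarrow> bool" where
  "hecke_hom_exists q n r k \<longleftrightarrow>
    (let T = hecke_img q n r k in
     (\<forall>i j. 1 \<le> i \<and> i \<le> k - 1 \<and> 1 \<le> j \<and> j \<le> k - 1 \<and> (i + 1 < j \<or> j + 1 < i) \<longrightarrow>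
        teq 2 k (tmul 2 k (T i) (T j)) (tmul 2 k (T j) (T i))) \<and>
     (\<forall>i. 1 \<le> i \<and> i \<le> k - 2 \<longrightarrow>
        teq 2 k (tmul 2 k (tmul 2 k (T i) (T (i + 1))) (T i))
                (tmul 2 k (tmul 2 k (T (i + 1)) (T i)) (T (i + 1)))) \<and>
     (\<forall>i. 1 \<le> i \<and> i \<le> k - 1 \<longrightarrow>
        teq 2 k (tmul 2 k (\<lambda>w u. T i w u - tid w u) (\<lambda>w u. T i w u + inverse q * tid w u))
                (\<lambda>w u. 0)) \<and>
     (\<forall>i. 1 \<le> i \<and> i \<le> k - 1 \<longrightarrow> is_Dn_endo q 2 r k (T i)))"

end

theory Submission
  imports Defs
begin

(* On V(2, r) the generators a and d square to zero, so only the terms s = 0, 1 of the R-matrix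
   survive, and averaging over the characters of Z/n turns the sum over m and t into the Cartan
   factor q^(x y).  Hence lambda_r^-1 Rcheck is an explicit 4 x 4 matrix hecke_R, and
   lambda_r^-1 Rcheck_i acts by hecke_R on the tensor slots i, i + 1 and as the identity elsewhere.
   All relations then reduce to identities between small matrices, checked entrywise: the
   quadratic and the braid relation for hecke_R, and its commutation with b (x) b, c (x) c and the
   two-site coproducts a (x) b + 1 (x) a and d (x) c + 1 (x) d.  Operators on disjoint pairs of
   slots commute. *)

section \<open>Roots of unity\<close>

lemma prim_root_power_eq_1: "prim_root n q \<Longrightarrow> q ^ n = 1"
  unfolding prim_root_def by simp

lemma prim_root_nonzero: "prim_root n (q::'a::field) \<Longrightarrow> n > 0 \<Longrightarrow> q \<noteq> 0"
  unfolding prim_root_def by (auto simp: power_0_left)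

lemma prim_root_neq_1:
  assumes "prim_root n q" "n \<ge> 2"
  shows "q \<noteq> 1"
proof -
  have "0 < (1::nat) \<and> 1 < n" using assms(2) by simp
  then show ?thesis using assms(1) unfolding prim_root_def by force
qed

lemma power_int_mod:
  fixes q :: "'a::field"
  assumes "q ^ n = 1" "n > 0"
  shows "q powi e = q powi (e mod int n)"
proof -
  have q0: "q \<noteq> 0" using assms by (auto simp: power_0_left)
  have "q powi e = q powi (int n * (e div int n)) * q powi (e mod int n)"
    by (metis div_mult_mod_eq mult.commute power_int_add q0)
  also have "q powi (int n * (e div int n)) = 1"
    by (simp add: power_int_mult assms(1))
  finally show ?thesis by simp
qed

lemma prim_root_power_int_eq_1_iff:
  fixes q :: "'a::field"
  assumes "prim_root n q" "n > 0"
  shows "q powi e = 1 \<longleftrightarrow> int n dvd e"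
proof -
  define m where "m = nat (e mod int n)"
  have "q powi e = q ^ m"
    unfolding m_def using power_int_mod[OF prim_root_power_eq_1[OF assms(1)] assms(2)] assms(2)
    by (simp add: power_int_nonneg_exp)
  moreover have "m < n" unfolding m_def using assms(2) by (simp add: nat_less_iff)
  then have "q ^ m = 1 \<longleftrightarrow> m = 0" using assms(1) unfolding prim_root_def by auto
  moreover have "0 \<le> e mod int n" using assms(2) by simp
  then have "m = 0 \<longleftrightarrow> int n dvd e" unfolding m_def by (auto simp: dvd_eq_mod_eq_0)
  ultimately show ?thesis by simp
qed

lemma sum_prim_root_powers:
  fixes q :: "'a::field"
  assumes "prim_root n q" "n > 0"
  shows "(\<Sum>m<n. q powi (e * int m)) = (if int n dvd e then of_nat n else 0)"
proof -
  have pw: "q powi (e * int m) = (q powi e) ^ m" for m by (simp add: power_int_power')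
  have "(q powi e) ^ n = 1"
    using prim_root_power_eq_1[OF assms(1)]
    by (simp add: power_int_power' mult.commute[of e] power_int_mult)
  then show ?thesis
    using prim_root_power_int_eq_1_iff[OF assms, of e]
    by (cases "int n dvd e") (simp_all add: pw geometric_sum)
qed

lemma sum_sum_prim_root_powers:
  fixes q :: "'a::field"
  assumes "prim_root n q" "n > 0"
  shows "(\<Sum>m<n. \<Sum>t<n. q powi (- (int t * int m)) * q powi (a * int t) * q powi (b * int m))
         = of_nat n * q powi (a * b)"
proof -
  have q0: "q \<noteq> 0" using prim_root_nonzero assms by blast
  define t0 where "t0 = nat (b mod int n)"
  have t0: "t0 < n" "int t0 = b mod int n" using assms(2) unfolding t0_def by (simp_all add: nat_less_iff)
  have dvd_iff: "int n dvd (b - int t) \<longleftrightarrow> t = t0" if "t < n" for t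
    using that t0 by (simp add: mod_eq_dvd_iff[symmetric]) linarith
  have "(\<Sum>m<n. \<Sum>t<n. q powi (- (int t * int m)) * q powi (a * int t) * q powi (b * int m))
      = (\<Sum>t<n. q powi (a * int t) * (\<Sum>m<n. q powi ((b - int t) * int m)))"
    using q0 by (subst sum.swap) (simp add: sum_distrib_left power_int_add[symmetric] algebra_simps)
  also have "\<dots> = (\<Sum>t<n. if t = t0 then q powi (a * int t) * of_nat n else 0)"
    by (rule sum.cong) (auto simp: sum_prim_root_powers[OF assms] dvd_iff)
  also have "\<dots> = q powi (a * int t0) * of_nat n" using t0 by simp
  also have "q powi (a * int t0) = q powi (a * b)"
    using power_int_mod[OF prim_root_power_eq_1[OF assms(1)] assms(2)] t0(2)
    by (metis mod_mult_right_eq)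
  finally show ?thesis by simp
qed

section \<open>Operators on tensor powers\<close>

lemma length_words: "w \<in> words l k \<Longrightarrow> length w = k"
  unfolding words_def by simp

lemma nth_words: "w \<in> words l k \<Longrightarrow> j < k \<Longrightarrow> w ! j \<in> {1..l}"
  unfolding words_def by (auto dest: nth_mem)

lemma update_words: "w \<in> words l k \<Longrightarrow> x \<in> {1..l} \<Longrightarrow> w[i := x] \<in> words l k"
  unfolding words_def using set_update_subset_insert[of w i x] by auto

lemma finite_words: "finite (words l k)"
  using finite_lists_length_eq[of "{1..l}" k] unfolding words_def by (simp add: conj_commute)

lemma teq_sym: "teq l k A B \<Longrightarrow> teq l k B A"
  unfolding teq_def by simp

lemma teq_trans [trans]: "teq l k A B \<Longrightarrow> teq l k B C \<Longrightarrow> teq l k A C"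
  unfolding teq_def by simp

lemma teq_tmul: "teq l k A A' \<Longrightarrow> teq l k B B' \<Longrightarrow> teq l k (tmul l k A B) (tmul l k A' B')"
  unfolding teq_def tmul_def by (auto intro!: sum.cong)

lemma teq_diff: "teq l k A A' \<Longrightarrow> teq l k B B' \<Longrightarrow> teq l k (\<lambda>w u. A w u - B w u) (\<lambda>w u. A' w u - B' w u)"
  unfolding teq_def by simp

lemma teq_add_scaled:
  "teq l k A A' \<Longrightarrow> teq l k B B' \<Longrightarrow> teq l k (\<lambda>w u. A w u + c * B w u) (\<lambda>w u. A' w u + c * B' w u)"
  unfolding teq_def by simp

lemma tmul_sum_left:
  "tmul l k (\<lambda>w u. \<Sum>j\<in>J. F j w u) B w u = (\<Sum>j\<in>J. tmul l k (F j) B w u)"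
  unfolding tmul_def by (simp add: sum_distrib_right) (rule sum.swap)

lemma tmul_sum_right:
  "tmul l k A (\<lambda>w u. \<Sum>j\<in>J. F j w u) w u = (\<Sum>j\<in>J. tmul l k A (F j) w u)"
  unfolding tmul_def by (simp add: sum_distrib_left) (rule sum.swap)

lemma tensor_split:
  assumes "Suc p < length fs"
  shows "tensor fs w u = (fs ! p) (w ! p) (u ! p) * (fs ! Suc p) (w ! Suc p) (u ! Suc p)
           * (\<Prod>t\<in>{..<length fs} - {p, Suc p}. (fs ! t) (w ! t) (u ! t))"
proof -
  let ?g = "\<lambda>t. (fs ! t) (w ! t) (u ! t)"
  have "tensor fs w u = ?g p * (\<Prod>t\<in>{..<length fs} - {p}. ?g t)"
    unfolding tensor_def by (rule prod.remove) (use assms in auto)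
  also have "(\<Prod>t\<in>{..<length fs} - {p}. ?g t) = ?g (Suc p) * (\<Prod>t\<in>{..<length fs} - {p} - {Suc p}. ?g t)"
    by (rule prod.remove) (use assms in auto)
  also have "{..<length fs} - {p} - {Suc p} = {..<length fs} - {p, Suc p}" by auto
  finally show ?thesis by (simp add: mult.assoc)
qed

lemma sum_eq_single:
  assumes "c \<in> A" "finite A" "\<And>x. x \<in> A \<Longrightarrow> x \<noteq> c \<Longrightarrow> g x = 0"
  shows "sum g A = g c"
proof -
  have "sum g A = sum g {c}"
    by (rule sum.mono_neutral_right) (use assms in auto)
  then show ?thesis by simp
qed

lemma sum_sum_eq_single:
  assumes "c \<in> A" "d \<in> B" "finite A" "finite B"
    and "\<And>x y. x \<in> A \<Longrightarrow> y \<in> B \<Longrightarrow> (x, y) \<noteq> (c, d) \<Longrightarrow> F x y = 0"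
  shows "(\<Sum>x\<in>A. \<Sum>y\<in>B. F x y) = F c d"
proof -
  have "(\<Sum>x\<in>A. \<Sum>y\<in>B. F x y) = (\<Sum>(x, y)\<in>A \<times> B. F x y)"
    by (simp add: sum.cartesian_product)
  also have "\<dots> = (\<Sum>(x, y)\<in>{(c, d)}. F x y)"
    by (rule sum.mono_neutral_right) (use assms in auto)
  finally show ?thesis by simp
qed

section \<open>Operators on two sites\<close>

text \<open>Operators on \<open>V \<otimes> V\<close>, with the conventions of \<open>smat\<close> and \<open>tmat\<close>: entry \<open>((a, b), (c, d))\<close>
  is the coefficient of \<open>v\<^sub>a \<otimes> v\<^sub>b\<close> in the image of \<open>v\<^sub>c \<otimes> v\<^sub>d\<close>.\<close>
type_synonym 'a pmat = "nat \<times> nat \<Rightarrow> nat \<times> nat \<Rightarrow> 'a"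

definition peq :: "nat \<Rightarrow> 'a pmat \<Rightarrow> 'a pmat \<Rightarrow> bool" where
  "peq l M N \<longleftrightarrow> (\<forall>a\<in>{1..l}. \<forall>b\<in>{1..l}. \<forall>c\<in>{1..l}. \<forall>d\<in>{1..l}. M (a, b) (c, d) = N (a, b) (c, d))"

definition pmul :: "nat \<Rightarrow> 'a::field pmat \<Rightarrow> 'a pmat \<Rightarrow> 'a pmat" where
  "pmul l M N ab cd = (\<Sum>x\<in>{1..l}. \<Sum>y\<in>{1..l}. M ab (x, y) * N (x, y) cd)"

definition pid :: "'a::field pmat" where
  "pid ab cd = (if ab = cd then 1 else 0)"

definition ptensor :: "'a::field smat \<Rightarrow> 'a smat \<Rightarrow> 'a pmat" where
  "ptensor X Y ab cd = X (fst ab) (fst cd) * Y (snd ab) (snd cd)"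

definition pcommute :: "nat \<Rightarrow> 'a::field pmat \<Rightarrow> 'a pmat \<Rightarrow> bool" where
  "pcommute l M N \<longleftrightarrow> peq l (pmul l M N) (pmul l N M)"

text \<open>The braid relation \<open>(M \<otimes> 1)(1 \<otimes> M)(M \<otimes> 1) = (1 \<otimes> M)(M \<otimes> 1)(1 \<otimes> M)\<close> on three sites,
  in coordinates.\<close>
definition braid_relation :: "nat \<Rightarrow> 'a::field pmat \<Rightarrow> bool" where
  "braid_relation l M \<longleftrightarrow>
     (\<forall>a1\<in>{1..l}. \<forall>a2\<in>{1..l}. \<forall>a3\<in>{1..l}. \<forall>c1\<in>{1..l}. \<forall>c2\<in>{1..l}. \<forall>c3\<in>{1..l}.
        (\<Sum>x\<in>{1..l}. \<Sum>y\<in>{1..l}. \<Sum>z\<in>{1..l}. M (a1, a2) (x, z) * M (z, a3) (y, c3) * M (x, y) (c1, c2))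
      = (\<Sum>x\<in>{1..l}. \<Sum>y\<in>{1..l}. \<Sum>z\<in>{1..l}. M (a2, a3) (z, y) * M (a1, z) (c1, x) * M (x, y) (c2, c3)))"

lemma pmul_add_left:
  "pmul l (\<lambda>ab cd. N ab cd + N' ab cd) M ab cd = pmul l N M ab cd + pmul l N' M ab cd"
  unfolding pmul_def by (simp add: distrib_right sum.distrib)

lemma pmul_add_right:
  "pmul l M (\<lambda>ab cd. N ab cd + N' ab cd) ab cd = pmul l M N ab cd + pmul l M N' ab cd"
  unfolding pmul_def by (simp add: distrib_left sum.distrib)

lemma pcommute_ptensor_Vid: "pcommute l M (ptensor (Vid l) (Vid l))"
  unfolding pcommute_def peq_def pmul_def ptensor_def Vid_def
  by (auto simp: if_distrib[where f="\<lambda>v. _ * v"] if_distrib[where f="\<lambda>v. v * _"] sum.delta sum.delta' cong: if_cong)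

section \<open>The R-matrix on V(2, r)\<close>

definition sdiag :: "nat \<Rightarrow> (nat \<Rightarrow> 'a::field) \<Rightarrow> 'a smat" where
  "sdiag l f = (\<lambda>i j. if i = j \<and> 1 \<le> j \<and> j \<le> l then f j else 0)"

lemma smul_sdiag_right: "smul l A (sdiag l f) i j = (if 1 \<le> j \<and> j \<le> l then A i j * f j else 0)"
  unfolding smul_def sdiag_def
  by (auto simp: if_distrib[where f="\<lambda>x. _ * x"] sum.delta' cong: if_cong intro!: sum.neutral)

lemma smul_sdiag_left: "smul l (sdiag l f) B i j = (if 1 \<le> i \<and> i \<le> l then f i * B i j else 0)"
  unfolding smul_def sdiag_def by (simp add: sum.delta if_distrib[where f="\<lambda>x. x * _"] cong: if_cong)

lemma smul_sdiag_sdiag: "smul l (sdiag l f) (sdiag l g) = sdiag l (\<lambda>j. f j * g j)"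
  unfolding fun_eq_iff smul_sdiag_left by (simp add: sdiag_def)

lemma smul_Va_left: "smul l (Va l) B i j = (if 2 \<le> i \<and> i \<le> l then B (i - 1) j else 0)"
proof -
  have "smul l (Va l) B i j = (\<Sum>p\<in>{1..l}. if p = i - 1 then (if 2 \<le> i \<and> i \<le> l then B p j else 0) else 0)"
    unfolding smul_def by (rule sum.cong) (auto simp: Va_def)
  then show ?thesis by (cases "2 \<le> i \<and> i \<le> l") auto
qed

lemma smul_Vd_right:
  "smul l A (Vd q l) i j = (if 2 \<le> j \<and> j \<le> l then A i (j - 1) * Dalpha q l (j - 1) else 0)"
proof -
  have "smul l A (Vd q l) i j = (\<Sum>p\<in>{1..l}. if p = j - 1
          then (if 2 \<le> j \<and> j \<le> l then A i p * Dalpha q l (j - 1) else 0) else 0)"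
    unfolding smul_def by (rule sum.cong) (auto simp: Vd_def)
  then show ?thesis by (cases "2 \<le> j \<and> j \<le> l") auto
qed

lemma Vid_eq_sdiag: "Vid l = sdiag l (\<lambda>_. 1)"
  unfolding Vid_def sdiag_def by simp

lemma spow_0: "spow l A 0 = Vid l"
  unfolding spow_def by simp

lemma spow_Suc: "spow l A (Suc m) = smul l A (spow l A m)"
  unfolding spow_def by simp

lemma spow_sdiag: "spow l (sdiag l f) t = sdiag l (\<lambda>j. f j ^ t)"
  by (induction t) (simp_all add: spow_0 Vid_eq_sdiag spow_Suc smul_sdiag_sdiag)

lemma spow_Vb: "spow l (Vb q l s) t = sdiag l (\<lambda>j. q powi ((s + int j - 1) * int t))"
  unfolding Vb_def by (fold sdiag_def) (simp add: spow_sdiag power_int_power')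

lemma spow_Vc: "spow l (Vc q l s) t = sdiag l (\<lambda>j. q powi ((int j - (s + int l)) * int t))"
  unfolding Vc_def by (fold sdiag_def) (simp add: spow_sdiag power_int_power')

lemma spow_nilpotent:
  assumes one: "spow l A 1 = A" and square: "smul l A A = (\<lambda>_ _. 0)" and "2 \<le> s"
  shows "spow l A s = (\<lambda>_ _. 0)"
  using \<open>2 \<le> s\<close>
proof (induction s rule: dec_induct)
  case base
  have "spow l A 2 = smul l A (spow l A 1)"
    by (metis Suc_1 spow_Suc)
  then show ?case by (simp only: one square)
next
  case (step s)
  then show ?case by (simp add: spow_Suc smul_def)
qed

lemma spow_Va2: "spow 2 (Va 2) s = (if s = 0 then Vid 2 else if s = 1 then Va 2 else (\<lambda>_ _. 0 :: 'a::field))"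
proof -
  have one: "spow 2 (Va 2) 1 = (Va 2 :: 'a smat)"
    by (auto simp: fun_eq_iff spow_Suc spow_0 Vid_eq_sdiag smul_sdiag_right Va_def)
  have "smul 2 (Va 2) (Va 2) = (\<lambda>_ _. 0 :: 'a)"
    unfolding fun_eq_iff smul_Va_left by (auto simp: Va_def)
  then show ?thesis using spow_nilpotent[OF one] by (simp add: spow_0 one[unfolded One_nat_def])
qed

lemma spow_Vd2: "spow 2 (Vd q 2) s = (if s = 0 then Vid 2 else if s = 1 then Vd q 2 else (\<lambda>_ _. 0 :: 'a::field))"
proof -
  have one: "spow 2 (Vd q 2) 1 = (Vd q 2 :: 'a smat)"
    by (auto simp: fun_eq_iff spow_Suc spow_0 Vid_eq_sdiag smul_sdiag_right Vd_def)
  have "smul 2 (Vd q 2) (Vd q 2) = (\<lambda>_ _. 0 :: 'a)"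
    unfolding fun_eq_iff smul_Vd_right by (auto simp: Vd_def Dalpha_def)
  then show ?thesis using spow_nilpotent[OF one] by (simp add: spow_0 one[unfolded One_nat_def])
qed

text \<open>The averaging over \<open>m, t\<close> in the R-matrix collapses to the Cartan factor \<open>q^(x y)\<close>,
  where \<open>b\<close> acts on \<open>v\<^sub>j\<^sub>1\<close> by \<open>q^x\<close> and \<open>c\<close> on \<open>v\<^sub>i\<^sub>2\<close> by \<open>q^y\<close>.\<close>
lemma Rmat_eq:
  fixes q :: "'a::field_char_0"
  assumes "prim_root n q" "n > 0" "j1 \<in> {1..l}" "i2 \<in> {1..l}"
  shows "Rmat q n l r (i1, i2) (j1, j2) = q powi ((r + int j1 - 1) * (int i2 - (r + int l)))
           * (\<Sum>s<n. spow l (Va l) s i1 j1 * spow l (Vd q l) s i2 j2 / qfact q s)"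
proof -
  define x where "x = r + int j1 - 1"
  define y where "y = int i2 - (r + int l)"
  define C where "C s = spow l (Va l) s i1 j1 * spow l (Vd q l) s i2 j2 / qfact q s" for s
  have "Rmat q n l r (i1, i2) (j1, j2)
      = 1 / of_nat n * (\<Sum>m<n. \<Sum>s<n. \<Sum>t<n.
           C s * (q powi (- (int t * int m)) * q powi (x * int t) * q powi (y * int m)))"
    unfolding Rmat_def spow_Vb spow_Vc smul_sdiag_right smul_sdiag_left C_def x_def y_def
    using assms(3,4) by (simp add: mult_ac)
  also have "\<dots> = 1 / of_nat n * (\<Sum>s<n. C s * (\<Sum>m<n. \<Sum>t<n.
           q powi (- (int t * int m)) * q powi (x * int t) * q powi (y * int m)))"
    by (subst sum.swap) (simp add: sum_distrib_left)
  also have "\<dots> = 1 / of_nat n * ((\<Sum>s<n. C s) * (of_nat n * q powi (x * y)))"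
    by (simp only: sum_sum_prim_root_powers[OF assms(1,2)] sum_distrib_right)
  also have "\<dots> = q powi (x * y) * (\<Sum>s<n. C s)"
    using assms(2) by simp
  finally show ?thesis unfolding x_def y_def C_def .
qed

lemma Rmat_V2:
  fixes q :: "'a::field_char_0"
  assumes "prim_root n q" "n \<ge> 2" "i1 \<in> {1,2}" "i2 \<in> {1,2}" "j1 \<in> {1,2}" "j2 \<in> {1,2}"
  shows "Rmat q n 2 r (i1, i2) (j1, j2) = q powi ((r + int j1 - 1) * (int i2 - (r + 2)))
           * ((if i1 = j1 \<and> i2 = j2 then 1 else 0)
              + (if (i1, j1, i2, j2) = (2, 1, 1, 2) then Dalpha q 2 1 else 0))"
proof -
  define C where "C s = spow 2 (Va 2) s i1 j1 * spow 2 (Vd q 2) s i2 j2 / qfact q s" for s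
  have "(\<Sum>s<n. C s) = (\<Sum>s\<in>{0, 1}. C s)"
    by (rule sum.mono_neutral_right) (use assms(2) in \<open>auto simp: C_def spow_Va2\<close>)
  also have "\<dots> = C 0 + C 1" by simp
  also have "C 0 = (if i1 = j1 \<and> i2 = j2 then 1 else 0)"
    using assms(3-6) unfolding C_def spow_0 Vid_def qfact_def by (elim insertE emptyE) simp_all
  also have "C 1 = (if (i1, j1, i2, j2) = (2, 1, 1, 2) then Dalpha q 2 1 else 0)"
    unfolding C_def spow_Va2 spow_Vd2 by (auto simp: Va_def Vd_def qfact_def qint_def)
  finally have "(\<Sum>s<n. C s) = (if i1 = j1 \<and> i2 = j2 then 1 else 0)
              + (if (i1, j1, i2, j2) = (2, 1, 1, 2) then Dalpha q 2 1 else 0)" .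
  moreover have "n > 0" "j1 \<in> {1..2}" "i2 \<in> {1..2}" using assms(2-6) by auto
  ultimately show ?thesis using Rmat_eq[OF assms(1), of j1 2 i2 r i1 j2] by (simp only: C_def) simp
qed

definition hecke_R :: "'a::field \<Rightarrow> int \<Rightarrow> 'a pmat" where
  "hecke_R q r = (\<lambda>(a, b) (c, d).
     if a = c \<and> b = d \<and> a = b then 1
     else if (a, b, c, d) = (1, 2, 1, 2) then 1 - inverse q
     else if (a, b, c, d) = (2, 1, 1, 2) then q powi r
     else if (a, b, c, d) = (1, 2, 2, 1) then q powi (- r - 1)
     else 0)"

lemma Dalpha_2_1: "q \<noteq> 1 \<Longrightarrow> Dalpha q 2 1 = 1 - inverse (q::'a::field)"
  unfolding Dalpha_def by (simp add: power_int_minus)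

lemma Rcheck_V2:
  fixes q :: "'a::field_char_0"
  assumes "prim_root n q" "n \<ge> 2" "a \<in> {1,2}" "b \<in> {1,2}" "c \<in> {1,2}" "d \<in> {1,2}"
  shows "Rcheck q n 2 r (a, b) (c, d) = q powi (- (r * (r + 1))) * hecke_R q r (a, b) (c, d)"
proof -
  have q0: "q \<noteq> 0" using prim_root_nonzero[OF assms(1)] assms(2) by simp
  have "Rcheck q n 2 r (a, b) (c, d) = q powi ((r + int c - 1) * (int a - (r + 2)))
           * ((if b = c \<and> a = d then 1 else 0)
              + (if (b, c, a, d) = (2, 1, 1, 2) then Dalpha q 2 1 else 0))"
    unfolding Rcheck_def using Rmat_V2[OF assms(1,2,4,3,5,6)] by simp
  moreover have "(r + int c - 1) * (int a - (r + 2))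
      = - (r * (r + 1)) + (r * (int a - int c) + (int c - 1) * (int a - 2))"
    by (simp add: algebra_simps)
  then have "q powi ((r + int c - 1) * (int a - (r + 2)))
      = q powi (- (r * (r + 1))) * q powi (r * (int a - int c) + (int c - 1) * (int a - 2))"
    by (simp only:) (rule power_int_add, use q0 in simp)
  ultimately show ?thesis
    using assms(3-6) Dalpha_2_1[OF prim_root_neq_1[OF assms(1,2)]]
    by (elim insertE emptyE) (simp_all add: hecke_R_def)
qed

section \<open>Operators acting on two adjacent sites\<close>

definition agree_outside :: "nat set \<Rightarrow> nat list \<Rightarrow> nat list \<Rightarrow> bool" where
  "agree_outside S w u \<longleftrightarrow> (\<forall>j<length w. j \<notin> S \<longrightarrow> w ! j = u ! j)"

text \<open>Acts by \<open>M\<close> on the list positions \<open>p, p + 1\<close>, i.e. on the tensor slots \<open>p + 1, p + 2\<close>.\<close>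
definition local_op :: "nat \<Rightarrow> 'a::field pmat \<Rightarrow> 'a tmat" where
  "local_op p M w u =
     (if agree_outside {p, Suc p} w u then M (w ! p, w ! Suc p) (u ! p, u ! Suc p) else 0)"

lemma agree_outside_refl: "agree_outside S w w"
  unfolding agree_outside_def by simp

lemma agree_outside_commute: "length u = length w \<Longrightarrow> agree_outside S u w \<longleftrightarrow> agree_outside S w u"
  unfolding agree_outside_def by auto

lemma agree_outside_update_left:
  "i < length w \<Longrightarrow>
     agree_outside S (w[i := x]) u \<longleftrightarrow> (i \<in> S \<or> x = u ! i) \<and> agree_outside (insert i S) w u"
  unfolding agree_outside_def by (auto simp: nth_list_update)

lemma agree_outside_update_right:
  "i < length w \<Longrightarrow> length u = length w \<Longrightarrow>
     agree_outside S w (u[i := x]) \<longleftrightarrow> (i \<in> S \<or> w ! i = x) \<and> agree_outside (insert i S) w u"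
  unfolding agree_outside_def by (auto simp: nth_list_update)

lemma agree_outside_pair_eq_update:
  assumes "length v = length w" "agree_outside {p, Suc p} w v"
  shows "v = w[p := v ! p, Suc p := v ! Suc p]"
proof (rule nth_equalityI)
  fix i assume "i < length v"
  then show "v ! i = w[p := v ! p, Suc p := v ! Suc p] ! i"
    using assms by (cases "i = p \<or> i = Suc p") (auto simp: agree_outside_def nth_list_update)
qed (use assms in simp)

lemma prod_indicator_eq_agree_outside:
  assumes "length w = k"
  shows "(\<Prod>t\<in>{..<k} - S. if w ! t = u ! t then 1 else 0) = (if agree_outside S w u then 1 else (0::'a::field))"
  using assms unfolding agree_outside_def by (simp add: prod_eq_1_iff prod_zero_iff) blast

lemma sum_words_agree_outside:
  assumes "Suc p < k" "w \<in> words l k"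
    and "\<And>v. v \<in> words l k \<Longrightarrow> \<not> agree_outside {p, Suc p} w v \<Longrightarrow> f v = 0"
  shows "(\<Sum>v\<in>words l k. f v) = (\<Sum>x\<in>{1..l}. \<Sum>y\<in>{1..l}. f (w[p := x, Suc p := y]))"
proof -
  define g where "g = (\<lambda>(x, y). w[p := x, Suc p := y])"
  have len: "length w = k" using assms(2) by (rule length_words)
  have "g (x, y) ! p = x" "g (x, y) ! Suc p = y" for x y
    using assms(1) len by (simp_all add: g_def nth_list_update)
  then have inj: "inj_on g ({1..l} \<times> {1..l})"
    by (metis inj_onI prod.collapse)
  have sub: "g ` ({1..l} \<times> {1..l}) \<subseteq> words l k"
    using assms(2) by (auto simp: g_def update_words)
  have "v \<in> g ` ({1..l} \<times> {1..l})" if "v \<in> words l k" "agree_outside {p, Suc p} w v" for v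
  proof -
    have "v = g (v ! p, v ! Suc p)"
      using agree_outside_pair_eq_update[OF _ that(2)] that(1) len by (simp add: g_def length_words)
    moreover have "(v ! p, v ! Suc p) \<in> {1..l} \<times> {1..l}"
      using nth_words[OF that(1)] assms(1) by simp
    ultimately show ?thesis by blast
  qed
  then have "(\<Sum>v\<in>words l k. f v) = (\<Sum>v\<in>g ` ({1..l} \<times> {1..l}). f v)"
    using assms(3) by (intro sum.mono_neutral_right[OF finite_words sub]) blast
  also have "\<dots> = (\<Sum>xy\<in>{1..l} \<times> {1..l}. f (g xy))"
    using sum.reindex[OF inj] by simp
  finally show ?thesis
    by (simp add: sum.cartesian_product g_def split_def)
qed

lemma local_op_update_left:
  "Suc p < length w \<Longrightarrow> local_op p M (w[p := x, Suc p := y]) u =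
     (if agree_outside {p, Suc p} w u then M (x, y) (u ! p, u ! Suc p) else 0)"
  unfolding local_op_def by (simp add: agree_outside_update_left insert_commute)

lemma tmul_local_op_left:
  assumes "Suc p < k" "w \<in> words l k"
  shows "tmul l k (local_op p M) B w u
           = (\<Sum>x\<in>{1..l}. \<Sum>y\<in>{1..l}. M (w ! p, w ! Suc p) (x, y) * B (w[p := x, Suc p := y]) u)"
  unfolding tmul_def
  by (subst sum_words_agree_outside[OF assms])
     (use assms in \<open>auto simp: local_op_def length_words agree_outside_update_right
        agree_outside_refl insert_commute nth_list_update\<close>)

lemma tmul_local_op_right:
  assumes "Suc p < k" "u \<in> words l k"
  shows "tmul l k B (local_op p M) w u
           = (\<Sum>x\<in>{1..l}. \<Sum>y\<in>{1..l}. B w (u[p := x, Suc p := y]) * M (x, y) (u ! p, u ! Suc p))"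
proof -
  have len: "Suc p < length u" using assms by (simp add: length_words)
  have "local_op p M v u = 0" if "v \<in> words l k" "\<not> agree_outside {p, Suc p} u v" for v
    using that assms(2) by (simp add: local_op_def agree_outside_commute length_words)
  then show ?thesis
    unfolding tmul_def using len
    by (subst sum_words_agree_outside[OF assms]) (simp_all add: local_op_update_left agree_outside_refl)
qed

lemma tmul_local_op_local_op:
  assumes "Suc p < k"
  shows "teq l k (tmul l k (local_op p M) (local_op p N)) (local_op p (pmul l M N))"
  unfolding teq_def
proof (intro ballI)
  fix w u assume w: "w \<in> words l k" and u: "u \<in> words l k"
  have "Suc p < length w" using assms w by (simp add: length_words)
  then show "tmul l k (local_op p M) (local_op p N) w u = local_op p (pmul l M N) w u"
    unfolding tmul_local_op_left[OF assms w]
    by (simp add: local_op_update_left) (simp add: local_op_def pmul_def)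
qed

lemma local_op_cong:
  assumes "Suc p < k" "peq l M N"
  shows "teq l k (local_op p M) (local_op p N)"
  unfolding teq_def
proof (intro ballI)
  fix w u assume "w \<in> words l k" "u \<in> words l k"
  then have "w ! p \<in> {1..l}" "w ! Suc p \<in> {1..l}" "u ! p \<in> {1..l}" "u ! Suc p \<in> {1..l}"
    using assms(1) by (blast intro: nth_words Suc_lessD)+
  then show "local_op p M w u = local_op p N w u"
    using assms(2) unfolding local_op_def peq_def by simp
qed

lemma local_op_zero: "local_op p (\<lambda>_ _. 0) = (\<lambda>_ _. 0)"
  by (simp add: fun_eq_iff local_op_def)

lemma local_op_diff:
  "local_op p (\<lambda>ab cd. M ab cd - N ab cd) = (\<lambda>w u. local_op p M w u - local_op p N w u)"
  by (simp add: fun_eq_iff local_op_def)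

lemma local_op_add_scaled:
  "local_op p (\<lambda>ab cd. M ab cd + c * N ab cd) = (\<lambda>w u. local_op p M w u + c * local_op p N w u)"
  by (simp add: fun_eq_iff local_op_def)

lemma tid_eq_local_op_pid:
  assumes "Suc p < k"
  shows "teq l k tid (local_op p pid)"
  unfolding teq_def
proof (intro ballI)
  fix w u assume "w \<in> words l k" "u \<in> words l k"
  then have "length u = length w" by (simp add: length_words)
  then have "w = u \<longleftrightarrow> agree_outside {p, Suc p} w u \<and> (w ! p, w ! Suc p) = (u ! p, u ! Suc p)"
    using agree_outside_pair_eq_update[of u w p] by (auto simp: agree_outside_refl) (metis list_update_id)
  then show "tid w u = local_op p pid w u"
    unfolding tid_def local_op_def pid_def by auto
qed

lemma local_op_quadratic:
  assumes "Suc p < k" "teq l k A (local_op p M)"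
    and "peq l (pmul l (\<lambda>ab cd. M ab cd - pid ab cd) (\<lambda>ab cd. M ab cd + c * pid ab cd)) (\<lambda>_ _. 0)"
  shows "teq l k (tmul l k (\<lambda>w u. A w u - tid w u) (\<lambda>w u. A w u + c * tid w u)) (\<lambda>_ _. 0)"
proof -
  have tid: "teq l k tid (local_op p pid)" by (rule tid_eq_local_op_pid[OF assms(1)])
  have "teq l k (tmul l k (\<lambda>w u. A w u - tid w u) (\<lambda>w u. A w u + c * tid w u))
      (tmul l k (local_op p (\<lambda>ab cd. M ab cd - pid ab cd)) (local_op p (\<lambda>ab cd. M ab cd + c * pid ab cd)))"
    unfolding local_op_diff local_op_add_scaled
    by (intro teq_tmul teq_diff teq_add_scaled assms(2) tid)
  also have "teq l k \<dots> (local_op p (pmul l (\<lambda>ab cd. M ab cd - pid ab cd) (\<lambda>ab cd. M ab cd + c * pid ab cd)))"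
    by (rule tmul_local_op_local_op[OF assms(1)])
  also have "teq l k \<dots> (local_op p (\<lambda>_ _. 0))"
    by (rule local_op_cong[OF assms(1,3)])
  finally show ?thesis by (simp only: local_op_zero)
qed

lemma tmul_local_op_far:
  fixes M N :: "'a::field pmat"
  assumes "Suc p < p'" "Suc p' < k" "w \<in> words l k" "u \<in> words l k"
  defines "E \<equiv> if agree_outside {p, Suc p, p', Suc p'} w u
                then M (w ! p, w ! Suc p) (u ! p, u ! Suc p) * N (w ! p', w ! Suc p') (u ! p', u ! Suc p')
                else 0"
  shows "tmul l k (local_op p M) (local_op p' N) w u = E"
    and "tmul l k (local_op p' N) (local_op p M) w u = E"
proof -
  have p: "Suc p < k" using assms(1,2) by simp
  have len: "length w = k" "length u = k" using assms(3,4) by (simp_all add: length_words)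
  have in_l: "u ! p \<in> {1..l}" "u ! Suc p \<in> {1..l}" "w ! p \<in> {1..l}" "w ! Suc p \<in> {1..l}"
    using p assms(3,4) by (blast intro: nth_words Suc_lessD)+
  have "local_op p' N (w[p := x, Suc p := y]) u
      = (if (x, y) = (u ! p, u ! Suc p) \<and> agree_outside {p, Suc p, p', Suc p'} w u
         then N (w ! p', w ! Suc p') (u ! p', u ! Suc p') else 0)" for x y
    using assms(1,2) len by (auto simp: local_op_def agree_outside_update_left nth_list_update insert_commute)
  then show "tmul l k (local_op p M) (local_op p' N) w u = E"
    unfolding tmul_local_op_left[OF p assms(3)]
    by (subst sum_sum_eq_single[OF in_l(1,2)]) (auto simp: E_def)
  have "local_op p' N w (u[p := x, Suc p := y])
      = (if (x, y) = (w ! p, w ! Suc p) \<and> agree_outside {p, Suc p, p', Suc p'} w u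
         then N (w ! p', w ! Suc p') (u ! p', u ! Suc p') else 0)" for x y
    using assms(1,2) len by (auto simp: local_op_def agree_outside_update_right nth_list_update insert_commute)
  then show "tmul l k (local_op p' N) (local_op p M) w u = E"
    unfolding tmul_local_op_right[OF p assms(4)]
    by (subst sum_sum_eq_single[OF in_l(3,4)]) (auto simp: E_def)
qed

lemma local_op_far_commute:
  assumes "teq l k A (local_op p M)" "teq l k B (local_op p' N)"
    and "Suc p < p' \<or> Suc p' < p" "Suc p < k" "Suc p' < k"
  shows "teq l k (tmul l k A B) (tmul l k B A)"
proof -
  have "teq l k (tmul l k (local_op p M) (local_op p' N)) (tmul l k (local_op p' N) (local_op p M))"
    unfolding teq_def
  proof (intro ballI)
    fix w u assume w: "w \<in> words l k" and u: "u \<in> words l k"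
    from assms(3) show "tmul l k (local_op p M) (local_op p' N) w u = tmul l k (local_op p' N) (local_op p M) w u"
    proof
      assume "Suc p < p'"
      from tmul_local_op_far[OF this assms(5) w u, where M = M and N = N] show ?thesis by simp
    next
      assume "Suc p' < p"
      from tmul_local_op_far[OF this assms(4) w u, where M = N and N = M] show ?thesis by simp
    qed
  qed
  then show ?thesis
    using teq_tmul[OF assms(1,2)] teq_tmul[OF assms(2,1)] by (meson teq_sym teq_trans)
qed

lemma tmul_local_op_local_op_Suc:
  assumes "Suc (Suc p) < k" "w \<in> words l k" "u \<in> words l k" "x \<in> {1..l}"
  shows "tmul l k (local_op p M) (local_op (Suc p) N) w (u[p := x, Suc p := y])
    = (if agree_outside {p, Suc p, Suc (Suc p)} w u
       then \<Sum>z\<in>{1..l}. M (w ! p, w ! Suc p) (x, z) * N (z, w ! Suc (Suc p)) (y, u ! Suc (Suc p))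
       else 0)"
proof -
  have len: "length w = k" "length u = k" using assms(2,3) by (simp_all add: length_words)
  have "local_op (Suc p) N (w[p := x', Suc p := y']) (u[p := x, Suc p := y])
      = (if x' = x \<and> agree_outside {p, Suc p, Suc (Suc p)} w u
         then N (y', w ! Suc (Suc p)) (y, u ! Suc (Suc p)) else 0)" for x' y'
    using assms(1) len
    by (auto simp: local_op_def agree_outside_update_left agree_outside_update_right nth_list_update insert_commute)
  then show ?thesis
    unfolding tmul_local_op_left[OF Suc_lessD[OF assms(1)] assms(2)] using assms(1,4)
    by (subst sum_eq_single[where c = x]) auto
qed

lemma tmul_local_op_Suc_local_op:
  assumes "Suc (Suc p) < k" "w \<in> words l k" "u \<in> words l k" "y \<in> {1..l}"
  shows "tmul l k (local_op (Suc p) N) (local_op p M) w (u[Suc p := x, Suc (Suc p) := y])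
    = (if agree_outside {p, Suc p, Suc (Suc p)} w u
       then \<Sum>z\<in>{1..l}. N (w ! Suc p, w ! Suc (Suc p)) (z, y) * M (w ! p, z) (u ! p, x)
       else 0)"
proof -
  have len: "length w = k" "length u = k" using assms(2,3) by (simp_all add: length_words)
  have "local_op p M (w[Suc p := x', Suc (Suc p) := y']) (u[Suc p := x, Suc (Suc p) := y])
      = (if y' = y \<and> agree_outside {p, Suc p, Suc (Suc p)} w u
         then M (w ! p, x') (u ! p, x) else 0)" for x' y'
    using assms(1) len
    by (auto simp: local_op_def agree_outside_update_left agree_outside_update_right nth_list_update insert_commute)
  then show ?thesis
    unfolding tmul_local_op_left[OF assms(1,2)] using assms(1,4)
    by (subst sum.swap, subst sum_eq_single[where c = y]) auto
qed

lemma local_op_braid: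
  assumes "Suc (Suc p) < k" "teq l k A (local_op p M)" "teq l k B (local_op (Suc p) M)"
    and "braid_relation l M"
  shows "teq l k (tmul l k (tmul l k A B) A) (tmul l k (tmul l k B A) B)"
proof -
  have "teq l k (tmul l k (tmul l k (local_op p M) (local_op (Suc p) M)) (local_op p M))
                (tmul l k (tmul l k (local_op (Suc p) M) (local_op p M)) (local_op (Suc p) M))"
    unfolding teq_def
  proof (intro ballI)
    fix w u assume w: "w \<in> words l k" and u: "u \<in> words l k"
    define a1 a2 a3 c1 c2 c3 where "a1 = w ! p" "a2 = w ! Suc p" "a3 = w ! Suc (Suc p)"
      "c1 = u ! p" "c2 = u ! Suc p" "c3 = u ! Suc (Suc p)"
    have in_l: "a1 \<in> {1..l}" "a2 \<in> {1..l}" "a3 \<in> {1..l}" "c1 \<in> {1..l}" "c2 \<in> {1..l}" "c3 \<in> {1..l}"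
      unfolding a1_a2_a3_c1_c2_c3_def using assms(1) w u by (blast intro: nth_words Suc_lessD)+
    have "tmul l k (tmul l k (local_op p M) (local_op (Suc p) M)) (local_op p M) w u
        = (\<Sum>x\<in>{1..l}. \<Sum>y\<in>{1..l}. (if agree_outside {p, Suc p, Suc (Suc p)} w u
             then \<Sum>z\<in>{1..l}. M (a1, a2) (x, z) * M (z, a3) (y, c3) else 0) * M (x, y) (c1, c2))"
      unfolding tmul_local_op_right[OF Suc_lessD[OF assms(1)] u] a1_a2_a3_c1_c2_c3_def
      by (intro sum.cong refl) (simp add: tmul_local_op_local_op_Suc[OF assms(1) w u])
    also have "\<dots> = (if agree_outside {p, Suc p, Suc (Suc p)} w u
           then \<Sum>x\<in>{1..l}. \<Sum>y\<in>{1..l}. \<Sum>z\<in>{1..l}. M (a1, a2) (x, z) * M (z, a3) (y, c3) * M (x, y) (c1, c2)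
           else 0)"
      by (simp add: sum_distrib_right)
    also have "\<dots> = (if agree_outside {p, Suc p, Suc (Suc p)} w u
           then \<Sum>x\<in>{1..l}. \<Sum>y\<in>{1..l}. \<Sum>z\<in>{1..l}. M (a2, a3) (z, y) * M (a1, z) (c1, x) * M (x, y) (c2, c3)
           else 0)"
      using assms(4) in_l unfolding braid_relation_def by simp
    also have "\<dots> = (\<Sum>x\<in>{1..l}. \<Sum>y\<in>{1..l}. (if agree_outside {p, Suc p, Suc (Suc p)} w u
             then \<Sum>z\<in>{1..l}. M (a2, a3) (z, y) * M (a1, z) (c1, x) else 0) * M (x, y) (c2, c3))"
      by (simp add: sum_distrib_right)
    also have "\<dots> = tmul l k (tmul l k (local_op (Suc p) M) (local_op p M)) (local_op (Suc p) M) w u"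
      unfolding tmul_local_op_right[OF assms(1) u] a1_a2_a3_c1_c2_c3_def
      by (intro sum.cong refl) (simp add: tmul_local_op_Suc_local_op[OF assms(1) w u])
    finally show "tmul l k (tmul l k (local_op p M) (local_op (Suc p) M)) (local_op p M) w u
        = tmul l k (tmul l k (local_op (Suc p) M) (local_op p M)) (local_op (Suc p) M) w u" .
  qed
  then show ?thesis
    using teq_tmul[OF teq_tmul[OF assms(2,3)] assms(2)] teq_tmul[OF teq_tmul[OF assms(3,2)] assms(3)]
    by (meson teq_sym teq_trans)
qed

lemma tmul_local_op_tensor:
  assumes "Suc p < k" "length fs = k" "w \<in> words l k" "u \<in> words l k"
  defines "R \<equiv> \<Prod>t\<in>{..<k} - {p, Suc p}. (fs ! t) (w ! t) (u ! t)"
  shows "tmul l k (local_op p M) (tensor fs) w u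
           = R * pmul l M (ptensor (fs ! p) (fs ! Suc p)) (w ! p, w ! Suc p) (u ! p, u ! Suc p)"
    and "tmul l k (tensor fs) (local_op p M) w u
           = R * pmul l (ptensor (fs ! p) (fs ! Suc p)) M (w ! p, w ! Suc p) (u ! p, u ! Suc p)"
proof -
  have len: "length w = k" "length u = k" using assms(3,4) by (simp_all add: length_words)
  have "(\<Prod>t\<in>{..<k} - {p, Suc p}. (fs ! t) (w[p := x, Suc p := y] ! t) (u ! t)) = R"
    "(\<Prod>t\<in>{..<k} - {p, Suc p}. (fs ! t) (w ! t) (u[p := x, Suc p := y] ! t)) = R" for x y
    unfolding R_def by (auto intro!: prod.cong simp: nth_list_update)
  then have "tensor fs (w[p := x, Suc p := y]) u = (fs ! p) x (u ! p) * (fs ! Suc p) y (u ! Suc p) * R"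
    "tensor fs w (u[p := x, Suc p := y]) = (fs ! p) (w ! p) x * (fs ! Suc p) (w ! Suc p) y * R" for x y
    using tensor_split[of p fs] assms(1,2) len by (simp_all add: nth_list_update)
  then show "tmul l k (local_op p M) (tensor fs) w u
           = R * pmul l M (ptensor (fs ! p) (fs ! Suc p)) (w ! p, w ! Suc p) (u ! p, u ! Suc p)"
    and "tmul l k (tensor fs) (local_op p M) w u
           = R * pmul l (ptensor (fs ! p) (fs ! Suc p)) M (w ! p, w ! Suc p) (u ! p, u ! Suc p)"
    unfolding tmul_local_op_left[OF assms(1,3)] tmul_local_op_right[OF assms(1,4)] pmul_def ptensor_def
    by (simp_all add: sum_distrib_left mult_ac)
qed

lemma local_op_commute_tensor:
  assumes "Suc p < k" "length fs = k" "teq l k A (local_op p M)"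
    and "pcommute l M (ptensor (fs ! p) (fs ! Suc p))"
  shows "teq l k (tmul l k A (tensor fs)) (tmul l k (tensor fs) A)"
proof -
  have "teq l k (tmul l k (local_op p M) (tensor fs)) (tmul l k (tensor fs) (local_op p M))"
    unfolding teq_def
  proof (intro ballI)
    fix w u assume w: "w \<in> words l k" and u: "u \<in> words l k"
    have "w ! p \<in> {1..l}" "w ! Suc p \<in> {1..l}" "u ! p \<in> {1..l}" "u ! Suc p \<in> {1..l}"
      using assms(1) w u by (blast intro: nth_words Suc_lessD)+
    then show "tmul l k (local_op p M) (tensor fs) w u = tmul l k (tensor fs) (local_op p M) w u"
      using assms(4) unfolding tmul_local_op_tensor[OF assms(1,2) w u] pcommute_def peq_def by simp
  qed
  moreover have "teq l k (tensor fs) (tensor fs)" by (simp add: teq_def)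
  ultimately show ?thesis
    using teq_tmul[OF assms(3)] teq_tmul[OF _ assms(3)] by (meson teq_sym teq_trans)
qed

text \<open>The terms \<open>j\<close> of the iterated coproduct \<open>\<Delta>(x) = \<Sum>\<^sub>j 1 \<otimes> \<dots> \<otimes> 1 \<otimes> x \<otimes> y \<otimes> \<dots> \<otimes> y\<close> act on
  the sites \<open>p, p + 1\<close> as \<open>y \<otimes> y\<close> for \<open>j < p\<close> and as \<open>1 \<otimes> 1\<close> for \<open>j > p + 1\<close>, while the two terms
  \<open>j \<in> {p, p + 1}\<close> together act there as the two-site coproduct \<open>x \<otimes> y + 1 \<otimes> x\<close>.\<close>
lemma local_op_commute_coproduct:
  assumes "Suc p < k" "teq l k A (local_op p M)"
    and "pcommute l M (ptensor Y Y)" "pcommute l M (ptensor I I)"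
    and "pcommute l M (\<lambda>ab cd. ptensor X Y ab cd + ptensor I X ab cd)"
  defines "D \<equiv> \<lambda>w u. \<Sum>j<k. tensor (replicate j I @ [X] @ replicate (k - j - 1) Y) w u"
  shows "teq l k (tmul l k A D) (tmul l k D A)"
proof -
  define fs where "fs j = replicate j I @ [X] @ replicate (k - j - 1) Y" for j
  have len: "length (fs j) = k" if "j < k" for j
    using that by (simp add: fs_def)
  have nth: "fs j ! t = (if t < j then I else if t = j then X else Y)" if "j < k" "t < k" for j t
    using that by (simp add: fs_def nth_append)
  have "teq l k (tmul l k (local_op p M) D) (tmul l k D (local_op p M))"
    unfolding teq_def
  proof (intro ballI)
    fix w u assume w: "w \<in> words l k" and u: "u \<in> words l k"
    define ab cd where "ab = (w ! p, w ! Suc p)" "cd = (u ! p, u ! Suc p)"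
    define R where "R j = (\<Prod>t\<in>{..<k} - {p, Suc p}. (fs j ! t) (w ! t) (u ! t))" for j
    define P where "P j = ptensor (fs j ! p) (fs j ! Suc p)" for j
    define d where "d j = R j * pmul l M (P j) ab cd - R j * pmul l (P j) M ab cd" for j
    have in_l: "fst ab \<in> {1..l}" "snd ab \<in> {1..l}" "fst cd \<in> {1..l}" "snd cd \<in> {1..l}"
      unfolding ab_cd_def fst_conv snd_conv using assms(1) w u by (blast intro: nth_words Suc_lessD)+
    have commute: "pmul l M N ab cd = pmul l N M ab cd" if "pcommute l M N" for N
      using that in_l unfolding pcommute_def peq_def by (cases ab, cases cd) simp
    have "d j = 0" if "j < k" "j \<notin> {p, Suc p}" for j
    proof (cases "j < p")
      case True
      then have "P j = ptensor Y Y" using that assms(1) by (simp add: P_def nth)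
      then show ?thesis using commute[OF assms(3)] by (simp add: d_def)
    next
      case False
      then have "P j = ptensor I I" using that assms(1) by (simp add: P_def nth)
      then show ?thesis using commute[OF assms(4)] by (simp add: d_def)
    qed
    then have "(\<Sum>j<k. d j) = (\<Sum>j\<in>{p, Suc p}. d j)"
      using assms(1) by (intro sum.mono_neutral_right) auto
    also have "\<dots> = d p + d (Suc p)" by simp
    also have "R p = R (Suc p)"
      unfolding R_def using assms(1) by (intro prod.cong refl) (auto simp: nth)
    then have "d p + d (Suc p) = R p * ((pmul l M (ptensor X Y) ab cd + pmul l M (ptensor I X) ab cd)
        - (pmul l (ptensor X Y) M ab cd + pmul l (ptensor I X) M ab cd))"
      using assms(1) by (simp add: d_def P_def nth algebra_simps)
    also have "\<dots> = 0"
      using commute[OF assms(5)] by (simp add: pmul_add_left pmul_add_right)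
    finally have "(\<Sum>j<k. d j) = 0" .
    then show "tmul l k (local_op p M) D w u = tmul l k D (local_op p M) w u"
      unfolding D_def tmul_sum_left tmul_sum_right fs_def[symmetric]
      by (simp add: tmul_local_op_tensor[OF assms(1) len w u] d_def R_def P_def ab_cd_def sum_subtractf)
  qed
  moreover have "teq l k D D" by (simp add: teq_def)
  ultimately show ?thesis
    using teq_tmul[OF assms(2)] teq_tmul[OF _ assms(2)] by (meson teq_sym teq_trans)
qed

section \<open>The Hecke matrix\<close>

lemma atLeastAtMost_1_2: "{1..2::nat} = {1, 2}"
  by auto

lemma hecke_R_quadratic:
  assumes "q \<noteq> 0"
  shows "peq 2 (pmul 2 (\<lambda>ab cd. hecke_R q r ab cd - pid ab cd) (\<lambda>ab cd. hecke_R q r ab cd + inverse q * pid ab cd)) (\<lambda>_ _. 0)"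
  unfolding peq_def pmul_def atLeastAtMost_1_2
  using assms by (simp add: hecke_R_def pid_def power_int_diff power_int_minus field_simps)

lemma hecke_R_braid:
  assumes "q \<noteq> 0"
  shows "braid_relation 2 (hecke_R q r)"
  unfolding braid_relation_def atLeastAtMost_1_2
proof (intro ballI)
  fix a1 a2 a3 c1 c2 c3 :: nat
  assume "a1 \<in> {1, 2}" "a2 \<in> {1, 2}" "a3 \<in> {1, 2}" "c1 \<in> {1, 2}" "c2 \<in> {1, 2}" "c3 \<in> {1, 2}"
  then show "(\<Sum>x\<in>{1, 2}. \<Sum>y\<in>{1, 2}. \<Sum>z\<in>{1, 2}.
          hecke_R q r (a1, a2) (x, z) * hecke_R q r (z, a3) (y, c3) * hecke_R q r (x, y) (c1, c2))
      = (\<Sum>x\<in>{1, 2}. \<Sum>y\<in>{1, 2}. \<Sum>z\<in>{1, 2}.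
          hecke_R q r (a2, a3) (z, y) * hecke_R q r (a1, z) (c1, x) * hecke_R q r (x, y) (c2, c3))"
    using assms
    by (elim insertE emptyE; simp add: hecke_R_def; simp add: power_int_diff power_int_minus field_simps)
qed

lemma hecke_R_commute_Vb: "pcommute 2 (hecke_R q r) (ptensor (Vb q 2 r) (Vb q 2 r))"
  unfolding pcommute_def peq_def pmul_def ptensor_def atLeastAtMost_1_2
  by (simp add: hecke_R_def Vb_def)

lemma hecke_R_commute_Vc: "pcommute 2 (hecke_R q r) (ptensor (Vc q 2 r) (Vc q 2 r))"
  unfolding pcommute_def peq_def pmul_def ptensor_def atLeastAtMost_1_2
  by (simp add: hecke_R_def Vc_def)

lemma hecke_R_commute_a:
  assumes "q \<noteq> 0"
  shows "pcommute 2 (hecke_R q r) (\<lambda>ab cd. ptensor (Va 2) (Vb q 2 r) ab cd + ptensor (Vid 2) (Va 2) ab cd)"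
  unfolding pcommute_def peq_def pmul_def ptensor_def atLeastAtMost_1_2
  using assms
  by (simp add: hecke_R_def Va_def Vb_def Vid_def power_int_diff power_int_minus power_int_add field_simps)

lemma hecke_R_commute_d:
  assumes "q \<noteq> 0" "q \<noteq> 1"
  shows "pcommute 2 (hecke_R q r) (\<lambda>ab cd. ptensor (Vd q 2) (Vc q 2 r) ab cd + ptensor (Vid 2) (Vd q 2) ab cd)"
  unfolding pcommute_def peq_def pmul_def ptensor_def atLeastAtMost_1_2
  using assms
  by (simp add: hecke_R_def Vd_def Vc_def Vid_def Dalpha_2_1[unfolded One_nat_def]
      power_int_diff power_int_minus power_int_add field_simps)

lemma hecke_img_eq_local_op:
  fixes q :: "'a::field_char_0"
  assumes "prim_root n q" "n \<ge> 2" "1 \<le> i" "i < k"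
  shows "teq 2 k (hecke_img q n r k i) (local_op (i - 1) (hecke_R q r))"
  unfolding teq_def
proof (intro ballI)
  fix w u assume w: "w \<in> words 2 k" and u: "u \<in> words 2 k"
  have q0: "q \<noteq> 0" using prim_root_nonzero[OF assms(1)] assms(2) by simp
  have i: "Suc (i - 1) = i" using assms(3) by simp
  have "w ! (i - 1) \<in> {1..2}" "w ! i \<in> {1..2}" "u ! (i - 1) \<in> {1..2}" "u ! i \<in> {1..2}"
    using assms(4) w u by (blast intro: nth_words less_imp_diff_less)+
  then have "Rcheck q n 2 r (w ! (i - 1), w ! i) (u ! (i - 1), u ! i)
      = q powi (- (r * (r + 1))) * hecke_R q r (w ! (i - 1), w ! i) (u ! (i - 1), u ! i)"
    unfolding atLeastAtMost_1_2 by (rule Rcheck_V2[OF assms(1,2)])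
  then show "hecke_img q n r k i w u = local_op (i - 1) (hecke_R q r) w u"
    unfolding hecke_img_def Rcheck_i_def local_op_def i prod_indicator_eq_agree_outside[OF length_words[OF w]]
    using q0 by simp
qed

lemma local_op_hecke_R_is_Dn_endo:
  assumes "Suc p < k" "teq 2 k A (local_op p (hecke_R q r))" "q \<noteq> 0" "q \<noteq> 1"
  shows "is_Dn_endo q 2 r k A"
  unfolding is_Dn_endo_def Delta_a_def Delta_b_def Delta_c_def Delta_d_def
  using assms(1)
  by (intro conjI local_op_commute_coproduct[OF assms(1,2)] local_op_commute_tensor[OF assms(1) _ assms(2)])
     (simp_all add: hecke_R_commute_Vb hecke_R_commute_Vc pcommute_ptensor_Vid
       hecke_R_commute_a[OF assms(3)] hecke_R_commute_d[OF assms(3,4)])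

theorem mainTheorem4:
  fixes q :: "'a::field_char_0" and n k :: nat and r :: int
  assumes alg_closed: "\<forall>p :: 'a poly. degree p > 0 \<longrightarrow> (\<exists>x. poly p x = 0)"
    and n2: "n \<ge> 2"
    and prim: "prim_root n q"
    and k2: "k \<ge> 2"
  shows "hecke_hom_exists q n r k"
proof -
  have q0: "q \<noteq> 0" and q1: "q \<noteq> 1"
    using prim_root_nonzero[OF prim] prim_root_neq_1[OF prim n2] n2 by auto
  define T where "T = hecke_img q n r k"
  have T: "teq 2 k (T i) (local_op p (hecke_R q r))" if "p = i - 1" "1 \<le> i" "i < k" for i p
    unfolding T_def that(1) by (rule hecke_img_eq_local_op[OF prim n2 that(2,3)])
  show ?thesis
    unfolding hecke_hom_exists_def Let_def T_def[symmetric]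
  proof (intro conjI allI impI)
    fix i j assume "1 \<le> i \<and> i \<le> k - 1 \<and> 1 \<le> j \<and> j \<le> k - 1 \<and> (i + 1 < j \<or> j + 1 < i)"
    then show "teq 2 k (tmul 2 k (T i) (T j)) (tmul 2 k (T j) (T i))"
      by (intro local_op_far_commute[OF T T]) auto
  next
    fix i assume "1 \<le> i \<and> i \<le> k - 2"
    then show "teq 2 k (tmul 2 k (tmul 2 k (T i) (T (i + 1))) (T i))
                       (tmul 2 k (tmul 2 k (T (i + 1)) (T i)) (T (i + 1)))"
      by (intro local_op_braid[OF _ T T hecke_R_braid[OF q0]]) auto
  next
    fix i assume "1 \<le> i \<and> i \<le> k - 1"
    then show "teq 2 k (tmul 2 k (\<lambda>w u. T i w u - tid w u) (\<lambda>w u. T i w u + inverse q * tid w u)) (\<lambda>_ _. 0)"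
      by (intro local_op_quadratic[OF _ T hecke_R_quadratic[OF q0]]) auto
  next
    fix i assume "1 \<le> i \<and> i \<le> k - 1"
    then show "is_Dn_endo q 2 r k (T i)"
      by (intro local_op_hecke_R_is_Dn_endo[OF _ T q0 q1]) auto
  qed
qed

end
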